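(* Under the hypotheses of the setting below, for every $k$ with $H_k\bar z^k\neq H_kz^k$ the stepsize satisfies $\alpha_k\ge \tfrac{\delta_k}{\gamma_k}+\tfrac12>0$, the update satisfies $z^{k+1}=(1-\lambda_k)z^k+\lambda_k P_{\mathcal D_k}(z^k)$ where $P_{\mathcal D_k}$ is the Euclidean projection onto the closed half-space $\mathcal D_k=\{w:\langle H_kz^k-H_k\bar z^k,\bar z^k-w\rangle\ge\tfrac{\delta_k}{\gamma_k}\|H_kz^k-H_k\bar z^k\|^2\}$, $\mathcal S^\star\subseteq\mathcal D_k$, and for every $z^\star\in\mathcal S^\star$ $$\|z^{k+1}-z^\star\|^2\le\|z^k-z^\star\|^2-\frac{\lambda_k(2-\lambda_k)(\tfrac{\gamma_k}{2}+\delta_k)^2}{\gamma_k^2}\|H_k\bar z^k-H_kz^k\|^2 .$$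
   Context: Setting: $A:\mathbb R^n\rightrightarrows\mathbb R^n$ maximally monotone, $F:\mathbb R^n\to\mathbb R^n$ $L$-Lipschitz, $T=A+F$, $\operatorname{zer}T=\{z:0\in Tz\}$; there is a nonempty $\mathcal S^\star\subseteq\operatorname{zer}T$ and $\rho\in\mathbb R$ with $\langle v,z-z^\star\rangle\ge\rho\|v\|^2$ for all $z^\star\in\mathcal S^\star$, $(z,v)$ with $v\in Tz$. Parameters: $\lambda_k\in(0,2)$, $\gamma_k\in(\max\{0,-2\rho\},\tfrac1L]$, $\delta_k\in(-\tfrac{\gamma_k}2,\rho]$. Iteration (AdaptiveEG+): $H_k:=\mathrm{id}-\gamma_kF$, $\bar z^k=(\mathrm{id}+\gamma_kA)^{-1}(z^k-\gamma_kFz^k)$, $\alpha_k=\frac{\delta_k}{\gamma_k}+\frac{\langle\bar z^k-z^k,H_k\bar z^k-H_kz^k\rangle}{\|H_k\bar z^k-H_kz^k\|^2}$, $z^{k+1}=z^k+\lambda_k\alpha_k(H_k\bar z^k-H_kz^k)$. *)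

theory Defs
  imports "HOL-Analysis.Analysis"
begin

definition monotone_op :: "('a::real_inner \<Rightarrow> 'a set) \<Rightarrow> bool" where
  "monotone_op A \<longleftrightarrow>
     (\<forall>x y u v. u \<in> A x \<longrightarrow> v \<in> A y \<longrightarrow> inner (u - v) (x - y) \<ge> 0)"

definition maximally_monotone :: "('a::real_inner \<Rightarrow> 'a set) \<Rightarrow> bool" where
  "maximally_monotone A \<longleftrightarrow> monotone_op A \<and>
     (\<forall>x u. (\<forall>y v. v \<in> A y \<longrightarrow> inner (u - v) (x - y) \<ge> 0) \<longrightarrow> u \<in> A x)"

definition op_sum :: "('a::real_vector \<Rightarrow> 'a set) \<Rightarrow> ('a \<Rightarrow> 'a) \<Rightarrow> 'a \<Rightarrow> 'a set" where
  "op_sum A F z = (\<lambda>a. a + F z) ` A z"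

definition zer :: "('a::real_vector \<Rightarrow> 'a set) \<Rightarrow> 'a set" where
  "zer T = {z. 0 \<in> T z}"

text \<open>Resolvent (id + gamma A)^{-1} evaluated at y, as the (set-valued) inverse image;
  for monotone A and gamma > 0 it is at most a singleton, for maximally monotone A exactly one.\<close>
definition resolvent :: "('a::real_vector \<Rightarrow> 'a set) \<Rightarrow> real \<Rightarrow> 'a \<Rightarrow> 'a set" where
  "resolvent A \<gamma> y = {x. y \<in> (\<lambda>a. x + \<gamma> *\<^sub>R a) ` A x}"

end

theory Submission
  imports Defs
begin

text \<open>Since \<open>\<gamma> L \<le> 1\<close>, the map \<open>\<gamma> F\<close> is nonexpansive, so the forward step
  \<open>H = id - \<gamma> F\<close> is 1/2-cocoercive; this gives \<open>\<alpha> \<ge> \<delta>/\<gamma> + 1/2\<close>. The resolvent step puts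
  \<open>(H z - H zbar)/\<gamma>\<close> into \<open>T zbar\<close>, so the weak Minty inequality together with \<open>\<delta> \<le> \<rho>\<close>
  places every \<open>z\<^sup>\<star>\<close> in the half-space \<open>D\<close>. The AdaptiveEG+ update is the relaxed projection
  onto \<open>D\<close>, and a relaxed projection onto a half-space containing \<open>z\<^sup>\<star>\<close> decreases the squared
  distance to \<open>z\<^sup>\<star>\<close> by \<open>\<lambda>(2 - \<lambda>)\<close> times the squared projection step.\<close>

definition forward_step :: "real \<Rightarrow> ('a::real_vector \<Rightarrow> 'a) \<Rightarrow> 'a \<Rightarrow> 'a" where
  "forward_step \<gamma> F w = w - \<gamma> *\<^sub>R F w"

lemma norm_diff_sq_le_two_inner:
  fixes e f :: "'a::real_inner"
  assumes "norm f \<le> norm e"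
  shows "(norm (e - f))\<^sup>2 \<le> 2 * inner e (e - f)"
proof -
  have "(norm f)\<^sup>2 \<le> (norm e)\<^sup>2"
    using assms by (simp add: power_mono)
  then show ?thesis
    by (simp add: power2_norm_eq_inner inner_diff_left inner_diff_right inner_commute)
qed

lemma forward_step_half_cocoercive:
  fixes F :: "'a::real_inner \<Rightarrow> 'a"
  assumes "L-lipschitz_on UNIV F" and "0 \<le> \<gamma>" and "\<gamma> * L \<le> 1"
  shows "(norm (forward_step \<gamma> F x - forward_step \<gamma> F y))\<^sup>2
           \<le> 2 * inner (x - y) (forward_step \<gamma> F x - forward_step \<gamma> F y)"
proof -
  have "norm (\<gamma> *\<^sub>R (F x - F y)) = \<gamma> * norm (F x - F y)"
    using \<open>0 \<le> \<gamma>\<close> by simp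
  also have "\<dots> \<le> \<gamma> * (L * norm (x - y))"
    using lipschitz_onD[OF assms(1), of x y] \<open>0 \<le> \<gamma>\<close>
    by (simp add: dist_norm mult_left_mono)
  also have "\<dots> \<le> norm (x - y)"
    using mult_right_mono[OF assms(3) norm_ge_zero[of "x - y"]] by simp
  finally have "(norm ((x - y) - \<gamma> *\<^sub>R (F x - F y)))\<^sup>2 \<le> 2 * inner (x - y) ((x - y) - \<gamma> *\<^sub>R (F x - F y))"
    by (rule norm_diff_sq_le_two_inner)
  then show ?thesis
    by (simp add: forward_step_def algebra_simps)
qed

lemma forward_step_inner_div_norm_sq_ge_half:
  fixes F :: "'a::real_inner \<Rightarrow> 'a"
  assumes "L-lipschitz_on UNIV F" and "0 \<le> \<gamma>" and "\<gamma> * L \<le> 1"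
    and "forward_step \<gamma> F x \<noteq> forward_step \<gamma> F y"
  shows "1/2 \<le> inner (x - y) (forward_step \<gamma> F x - forward_step \<gamma> F y)
                / (norm (forward_step \<gamma> F x - forward_step \<gamma> F y))\<^sup>2"
  using forward_step_half_cocoercive[OF assms(1-3), of x y] assms(4)
  by (simp add: le_divide_eq)

lemma resolvent_forward_residual_in_op_sum:
  assumes "\<gamma> \<noteq> 0" and "xbar \<in> resolvent A \<gamma> (x - \<gamma> *\<^sub>R F x)"
  shows "(1 / \<gamma>) *\<^sub>R (forward_step \<gamma> F x - forward_step \<gamma> F xbar) \<in> op_sum A F xbar"
proof -
  obtain a where "a \<in> A xbar" and a: "x - \<gamma> *\<^sub>R F x = xbar + \<gamma> *\<^sub>R a"
    using assms(2) unfolding resolvent_def by blast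
  have "forward_step \<gamma> F x - forward_step \<gamma> F xbar = \<gamma> *\<^sub>R (a + F xbar)"
    using a by (simp add: forward_step_def algebra_simps)
  then show ?thesis
    using \<open>a \<in> A xbar\<close> \<open>\<gamma> \<noteq> 0\<close> by (simp add: op_sum_def)
qed

lemma resolvent_weak_minty_inner_bound:
  assumes "0 < \<gamma>" and "\<delta> \<le> \<rho>" and "xbar \<in> resolvent A \<gamma> (x - \<gamma> *\<^sub>R F x)"
    and minty: "\<forall>w v. v \<in> op_sum A F w \<longrightarrow> \<rho> * (norm v)\<^sup>2 \<le> inner v (w - zs)"
  defines "u \<equiv> forward_step \<gamma> F x - forward_step \<gamma> F xbar"
  shows "\<delta> / \<gamma> * (norm u)\<^sup>2 \<le> inner u (xbar - zs)"
proof -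
  have "(1 / \<gamma>) *\<^sub>R u \<in> op_sum A F xbar"
    unfolding u_def using assms(1,3) by (intro resolvent_forward_residual_in_op_sum) auto
  then have "\<rho> * (norm u / \<gamma>)\<^sup>2 \<le> inner u (xbar - zs) / \<gamma>"
    using minty \<open>0 < \<gamma>\<close> by fastforce
  then have "\<gamma> * (\<rho> * (norm u / \<gamma>)\<^sup>2) \<le> \<gamma> * (inner u (xbar - zs) / \<gamma>)"
    using \<open>0 < \<gamma>\<close> by (intro mult_left_mono) auto
  then have "\<rho> / \<gamma> * (norm u)\<^sup>2 \<le> inner u (xbar - zs)"
    using \<open>0 < \<gamma>\<close> by (simp add: power2_eq_square)
  moreover have "\<delta> / \<gamma> * (norm u)\<^sup>2 \<le> \<rho> / \<gamma> * (norm u)\<^sup>2"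
    using assms(1,2) by (intro mult_right_mono divide_right_mono) auto
  ultimately show ?thesis
    by linarith
qed

lemma closest_point_halfspace_le:
  fixes u :: "'a::euclidean_space"
  assumes "u \<noteq> 0" and "b \<le> inner u x"
  shows "closest_point {w. inner u w \<le> b} x = x - ((inner u x - b) / (norm u)\<^sup>2) *\<^sub>R u"
proof (rule closest_point_unique[symmetric])
  define t where "t = (inner u x - b) / (norm u)\<^sup>2"
  have "0 \<le> t" and "t * (norm u)\<^sup>2 = inner u x - b"
    using assms by (simp_all add: t_def)
  then have "inner u (x - t *\<^sub>R u) = b"
    by (simp add: inner_diff_right power2_norm_eq_inner)
  then show "x - t *\<^sub>R u \<in> {w. inner u w \<le> b}"
    by simp
  show "\<forall>y\<in>{w. inner u w \<le> b}. dist x (x - t *\<^sub>R u) \<le> dist x y"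
  proof
    fix y assume "y \<in> {w. inner u w \<le> b}"
    then have "0 \<le> t * (b - inner u y)"
      using \<open>0 \<le> t\<close> by simp
    also have "\<dots> = inner (t *\<^sub>R u) ((x - t *\<^sub>R u) - y)"
      using \<open>inner u (x - t *\<^sub>R u) = b\<close>
      by (simp only: inner_scaleR_left inner_diff_right[of u "x - t *\<^sub>R u" y])
    finally have "0 \<le> inner (t *\<^sub>R u) ((x - t *\<^sub>R u) - y)" .
    moreover have "(norm (x - y))\<^sup>2 = (norm (t *\<^sub>R u))\<^sup>2 + (norm ((x - t *\<^sub>R u) - y))\<^sup>2
        + 2 * inner (t *\<^sub>R u) ((x - t *\<^sub>R u) - y)"
      using dot_norm[of "t *\<^sub>R u" "(x - t *\<^sub>R u) - y"] by simp
    ultimately have "(norm (x - (x - t *\<^sub>R u)))\<^sup>2 \<le> (norm (x - y))\<^sup>2"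
      by simp
    then show "dist x (x - t *\<^sub>R u) \<le> dist x y"
      by (simp add: dist_norm)
  qed
qed (simp_all add: convex_halfspace_le closed_halfspace_le)

lemma relaxed_step_dist_sq_decrease:
  fixes x d zs :: "'a::real_inner"
  assumes "0 \<le> l" and "l \<le> 2" and "0 \<le> a\<^sub>0" and "a\<^sub>0 \<le> a"
    and "a * (norm d)\<^sup>2 \<le> inner d (zs - x)"
  shows "(norm (x + (l * a) *\<^sub>R d - zs))\<^sup>2 \<le> (norm (x - zs))\<^sup>2 - l * (2 - l) * a\<^sub>0\<^sup>2 * (norm d)\<^sup>2"
proof -
  have "(norm (x + (l * a) *\<^sub>R d - zs))\<^sup>2
      = (norm (x - zs))\<^sup>2 + (l * a)\<^sup>2 * (norm d)\<^sup>2 - 2 * (l * a) * inner d (zs - x)"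
    using dot_norm[of "x - zs" "(l * a) *\<^sub>R d"]
    by (simp add: power_mult_distrib inner_diff_right inner_commute algebra_simps)
  also have "\<dots> \<le> (norm (x - zs))\<^sup>2 + (l * a)\<^sup>2 * (norm d)\<^sup>2 - 2 * (l * a) * (a * (norm d)\<^sup>2)"
    using assms by (intro diff_left_mono mult_left_mono) auto
  also have "\<dots> = (norm (x - zs))\<^sup>2 - l * (2 - l) * a\<^sup>2 * (norm d)\<^sup>2"
    by (simp add: power2_eq_square algebra_simps)
  also have "\<dots> \<le> (norm (x - zs))\<^sup>2 - l * (2 - l) * a\<^sub>0\<^sup>2 * (norm d)\<^sup>2"
    using assms(1-4) by (intro diff_left_mono mult_right_mono mult_left_mono power_mono) auto
  finally show ?thesis .
qed

lemma relaxed_projection_halfspace_dist_sq_decrease: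
  fixes u :: "'a::euclidean_space"
  assumes "u \<noteq> 0" and "b \<le> inner u x" and "inner u zs \<le> b"
    and "0 \<le> l" and "l \<le> 2" and "0 \<le> a\<^sub>0" and "a\<^sub>0 \<le> (inner u x - b) / (norm u)\<^sup>2"
  shows "(norm ((1 - l) *\<^sub>R x + l *\<^sub>R closest_point {w. inner u w \<le> b} x - zs))\<^sup>2
           \<le> (norm (x - zs))\<^sup>2 - l * (2 - l) * a\<^sub>0\<^sup>2 * (norm u)\<^sup>2"
proof -
  define t where "t = (inner u x - b) / (norm u)\<^sup>2"
  have "t * (norm (- u))\<^sup>2 \<le> inner (- u) (zs - x)"
    using assms(1,3) by (simp add: t_def inner_diff_right)
  then have "(norm (x + (l * t) *\<^sub>R (- u) - zs))\<^sup>2 \<le> (norm (x - zs))\<^sup>2 - l * (2 - l) * a\<^sub>0\<^sup>2 * (norm (- u))\<^sup>2"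
    using assms(4-7) by (intro relaxed_step_dist_sq_decrease) (auto simp: t_def)
  moreover have "(1 - l) *\<^sub>R x + l *\<^sub>R closest_point {w. inner u w \<le> b} x = x + (l * t) *\<^sub>R (- u)"
    unfolding closest_point_halfspace_le[OF assms(1,2)] t_def by (simp add: algebra_simps)
  ultimately show ?thesis
    by simp
qed

theorem mainTheorem2:
  fixes A :: "'a::euclidean_space \<Rightarrow> 'a set"
    and F :: "'a \<Rightarrow> 'a"
    and L \<rho> :: real
    and S :: "'a set"
    and z zbar :: "nat \<Rightarrow> 'a"
    and lam \<gamma> \<delta> :: "nat \<Rightarrow> real"
    and k :: nat
  defines "H \<equiv> (\<lambda>j w. w - \<gamma> j *\<^sub>R F w)"
  defines "\<alpha> \<equiv> (\<lambda>j. \<delta> j / \<gamma> j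
              + inner (zbar j - z j) (H j (zbar j) - H j (z j)) / (norm (H j (zbar j) - H j (z j)))\<^sup>2)"
  defines "D \<equiv> (\<lambda>j. {w. inner (H j (z j) - H j (zbar j)) (zbar j - w)
              \<ge> \<delta> j / \<gamma> j * (norm (H j (z j) - H j (zbar j)))\<^sup>2})"
  assumes A_max: "maximally_monotone A"
    and F_lip: "L-lipschitz_on UNIV F"
    and S_ne: "S \<noteq> {}"
    and S_zer: "S \<subseteq> zer (op_sum A F)"
    and weak_minty: "\<forall>zs\<in>S. \<forall>w v. v \<in> op_sum A F w \<longrightarrow> inner v (w - zs) \<ge> \<rho> * (norm v)\<^sup>2"
    and lam_bd: "\<forall>j. 0 < lam j \<and> lam j < 2"
    and gam: "\<forall>j. max 0 (-2 * \<rho>) < \<gamma> j \<and> \<gamma> j * L \<le> 1"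
    and del: "\<forall>j. - \<gamma> j / 2 < \<delta> j \<and> \<delta> j \<le> \<rho>"
    and zbar_def: "\<forall>j. zbar j \<in> resolvent A (\<gamma> j) (z j - \<gamma> j *\<^sub>R F (z j))"
    and iter: "\<forall>j. z (Suc j) = z j + (lam j * \<alpha> j) *\<^sub>R (H j (zbar j) - H j (z j))"
    and nz: "H k (zbar k) \<noteq> H k (z k)"
  shows "\<alpha> k \<ge> \<delta> k / \<gamma> k + 1/2 \<and> \<delta> k / \<gamma> k + 1/2 > 0
    \<and> closed (D k)
    \<and> z (Suc k) = (1 - lam k) *\<^sub>R z k + lam k *\<^sub>R closest_point (D k) (z k)
    \<and> S \<subseteq> D k
    \<and> (\<forall>zs\<in>S. (norm (z (Suc k) - zs))\<^sup>2 \<le> (norm (z k - zs))\<^sup>2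
         - lam k * (2 - lam k) * (\<gamma> k / 2 + \<delta> k)\<^sup>2 / (\<gamma> k)\<^sup>2
           * (norm (H k (zbar k) - H k (z k)))\<^sup>2)"
proof -
  have "0 < \<gamma> k" "\<gamma> k * L \<le> 1" "- \<gamma> k / 2 < \<delta> k" "\<delta> k \<le> \<rho>" "0 < lam k" "lam k < 2"
    using gam del lam_bd by (auto dest: spec[of _ k])
  have H: "H k = forward_step (\<gamma> k) F"
    by (simp add: H_def forward_step_def fun_eq_iff)
  define u where "u = H k (z k) - H k (zbar k)"
  define b where "b = inner u (zbar k) - \<delta> k / \<gamma> k * (norm u)\<^sup>2"
  have "u \<noteq> 0"
    using nz by (simp add: u_def)
  have D_halfspace: "D k = {w. inner u w \<le> b}"
    by (auto simp: D_def u_def b_def inner_diff_right)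
  have \<alpha>_halfspace: "\<alpha> k = (inner u (z k) - b) / (norm u)\<^sup>2"
    using \<open>u \<noteq> 0\<close> unfolding \<alpha>_def u_def b_def
    by (simp add: norm_minus_commute inner_diff_left inner_diff_right inner_commute field_simps)
  have \<alpha>_ge: "\<delta> k / \<gamma> k + 1/2 \<le> \<alpha> k"
    using forward_step_inner_div_norm_sq_ge_half[OF F_lip, of "\<gamma> k" "zbar k" "z k"] nz
      \<open>0 < \<gamma> k\<close> \<open>\<gamma> k * L \<le> 1\<close> by (simp add: \<alpha>_def H)
  moreover have \<alpha>_pos: "0 < \<delta> k / \<gamma> k + 1/2"
    using \<open>0 < \<gamma> k\<close> \<open>- \<gamma> k / 2 < \<delta> k\<close> by (simp add: field_simps)
  ultimately have "0 < (inner u (z k) - b) / (norm u)\<^sup>2"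
    unfolding \<alpha>_halfspace by linarith
  then have "b \<le> inner u (z k)"
    by (simp add: zero_less_divide_iff)
  have proj: "closest_point (D k) (z k) = z k - \<alpha> k *\<^sub>R u"
    unfolding D_halfspace \<alpha>_halfspace using \<open>u \<noteq> 0\<close> \<open>b \<le> inner u (z k)\<close>
    by (rule closest_point_halfspace_le)
  have "z (Suc k) = z k - (lam k * \<alpha> k) *\<^sub>R u"
    using iter by (simp add: u_def algebra_simps)
  then have update: "z (Suc k) = (1 - lam k) *\<^sub>R z k + lam k *\<^sub>R closest_point (D k) (z k)"
    unfolding proj by (simp add: algebra_simps)
  have S_D: "S \<subseteq> D k"
  proof
    fix zs assume "zs \<in> S"
    then show "zs \<in> D k"
      using resolvent_weak_minty_inner_bound[of "\<gamma> k" "\<delta> k" \<rho> "zbar k" A "z k" F zs]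
        weak_minty zbar_def \<open>0 < \<gamma> k\<close> \<open>\<delta> k \<le> \<rho>\<close>
      by (simp add: D_def H)
  qed
  have "(\<delta> k / \<gamma> k + 1/2)\<^sup>2 = (\<gamma> k / 2 + \<delta> k)\<^sup>2 / (\<gamma> k)\<^sup>2"
    using \<open>0 < \<gamma> k\<close> by (simp add: power_divide[symmetric] field_simps)
  then have "(norm (z (Suc k) - zs))\<^sup>2 \<le> (norm (z k - zs))\<^sup>2
         - lam k * (2 - lam k) * (\<gamma> k / 2 + \<delta> k)\<^sup>2 / (\<gamma> k)\<^sup>2
           * (norm (H k (zbar k) - H k (z k)))\<^sup>2" if "zs \<in> S" for zs
    using relaxed_projection_halfspace_dist_sq_decrease[OF \<open>u \<noteq> 0\<close> \<open>b \<le> inner u (z k)\<close>,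
        of zs "lam k" "\<delta> k / \<gamma> k + 1/2"] S_D that \<alpha>_ge \<alpha>_pos \<open>0 < lam k\<close> \<open>lam k < 2\<close>
    by (auto simp: update D_halfspace \<alpha>_halfspace u_def norm_minus_commute)
  then show ?thesis
    using \<alpha>_ge \<alpha>_pos S_D update by (simp add: D_halfspace closed_halfspace_le)
qed

end
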